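(* Let $N \ge 1$ be an integer. For every integer $M$ with $0 \le M \le \binom{\lfloor N/2 \rfloor + 1}{2} - 1$, the pair $(N,M)$ is feasible for the family of all line graphs.
   Context: All graphs are finite and simple; $L(G)$ is the line graph of $G$. A pair $(N,M)$ is feasible (for the family of all line graphs) if there exists a graph $G$ such that $L(G)$ has exactly $N$ vertices and exactly $M$ edges. *)

theory Defs
  imports Main
begin

definition simple_graph :: "'a set \<Rightarrow> 'a set set \<Rightarrow> bool" where
  "simple_graph V E \<longleftrightarrow> finite V \<and>
     (\<forall>e\<in>E. \<exists>u v. e = {u, v} \<and> u \<noteq> v \<and> u \<in> V \<and> v \<in> V)"

definition line_graph_vertices :: "'a set set \<Rightarrow> 'a set set" where
  "line_graph_vertices E = E"

definition line_graph_edges :: "'a set set \<Rightarrow> 'a set set set" where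
  "line_graph_edges E = {{e, f} | e f. e \<in> E \<and> f \<in> E \<and> e \<noteq> f \<and> e \<inter> f \<noteq> {}}"

text \<open>(N,M) feasible for line graphs: some finite simple graph G has L(G) with exactly
  N vertices and M edges. Vertices of G are taken from nat (any finite graph is
  isomorphic to one on nat).\<close>
definition line_feasible :: "nat \<Rightarrow> nat \<Rightarrow> bool" where
  "line_feasible N M \<longleftrightarrow> (\<exists>(V::nat set) E. simple_graph V E \<and>
      card (line_graph_vertices E) = N \<and> card (line_graph_edges E) = M)"

end

theory Submission
  imports Defs
begin

text \<open>Write \<open>M = (d choose 2) + r\<close> with \<open>r < d \<le> N div 2\<close>. The star \<open>K\<^sub>1\<^sub>,\<^sub>d\<close> has
  the complete graph \<open>K\<^sub>d\<close> as line graph, a path with \<open>r + 1\<close> edges has a path with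
  \<open>r\<close> edges as line graph, and isolated edges add vertices but no edges to the line
  graph. The disjoint union of the star and the path uses \<open>d + r + 1 \<le> 2 d \<le> N\<close>
  edges, so isolated edges fill it up to exactly \<open>N\<close>. All three pieces are grown
  one pendant edge \<open>{u, w}\<close> (with \<open>w\<close> new) at a time, which adds as many edges to
  the line graph as the degree of \<open>u\<close>.\<close>

definition vertex_degree :: "'a set set \<Rightarrow> 'a \<Rightarrow> nat" where
  "vertex_degree E v = card {e \<in> E. v \<in> e}"

lemma vertex_degree_eq_0:
  assumes "v \<notin> \<Union>E"
  shows "vertex_degree E v = 0"
proof -
  have "{e \<in> E. v \<in> e} = {}" using assms by blast
  then show ?thesis by (simp only: vertex_degree_def card.empty)
qed

lemma simple_graph_finite_vertices: "simple_graph V E \<Longrightarrow> finite V"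
  unfolding simple_graph_def by (rule conjunct1)

lemma simple_graph_Union_subset: "simple_graph V E \<Longrightarrow> \<Union>E \<subseteq> V"
  unfolding simple_graph_def by fastforce

lemma simple_graph_finite_edges:
  assumes "simple_graph V E"
  shows "finite E"
proof -
  have "E \<subseteq> Pow V" using simple_graph_Union_subset[OF assms] by blast
  moreover have "finite V" using assms by (rule simple_graph_finite_vertices)
  ultimately show ?thesis by (simp add: finite_subset)
qed

lemma line_graph_edges_subset_Pow: "line_graph_edges E \<subseteq> Pow E"
  unfolding line_graph_edges_def by blast

lemma finite_line_graph_edges: "finite E \<Longrightarrow> finite (line_graph_edges E)"
  by (rule finite_subset[OF line_graph_edges_subset_Pow]) simp

lemma simple_graph_add_edge:
  assumes "simple_graph V E" and "u \<noteq> w"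
  shows "simple_graph (insert u (insert w V)) (insert {u, w} E)"
  using assms unfolding simple_graph_def by blast

lemma line_graph_edges_add_pendant:
  assumes "w \<notin> \<Union>E" and "u \<noteq> w"
  shows "line_graph_edges (insert {u, w} E) =
    line_graph_edges E \<union> (\<lambda>f. {{u, w}, f}) ` {f \<in> E. u \<in> f}"
proof -
  have new: "{u, w} \<notin> E" using assms(1) by blast
  have meet: "{u, w} \<inter> f \<noteq> {} \<longleftrightarrow> u \<in> f" if "f \<in> E" for f
    using assms(1) that by blast
  show ?thesis
  proof (intro equalityI subsetI)
    fix x assume "x \<in> line_graph_edges (insert {u, w} E)"
    then obtain e f where x: "x = {e, f}" "e \<in> insert {u, w} E" "f \<in> insert {u, w} E"
      "e \<noteq> f" "e \<inter> f \<noteq> {}"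
      unfolding line_graph_edges_def by blast
    consider "e = {u, w}" | "f = {u, w}" | "e \<in> E" "f \<in> E" using x(2,3) by blast
    then show "x \<in> line_graph_edges E \<union> (\<lambda>f. {{u, w}, f}) ` {f \<in> E. u \<in> f}"
    proof cases
      case 1
      then show ?thesis using x meet by blast
    next
      case 2
      then show ?thesis using x meet[of e] by (auto simp: insert_commute Int_commute)
    next
      case 3
      then show ?thesis using x unfolding line_graph_edges_def by blast
    qed
  next
    fix x assume "x \<in> line_graph_edges E \<union> (\<lambda>f. {{u, w}, f}) ` {f \<in> E. u \<in> f}"
    then show "x \<in> line_graph_edges (insert {u, w} E)"
      using meet new unfolding line_graph_edges_def by blast
  qed
qed

lemma card_line_graph_edges_add_pendant:
  assumes "finite E" and "w \<notin> \<Union>E" and "u \<noteq> w"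
  shows "card (line_graph_edges (insert {u, w} E)) =
    card (line_graph_edges E) + vertex_degree E u"
proof -
  let ?new = "(\<lambda>f. {{u, w}, f}) ` {f \<in> E. u \<in> f}"
  have fresh_edge: "{u, w} \<notin> E" using assms(2) by blast
  then have "?new \<inter> Pow E = {}" by blast
  then have disjoint: "line_graph_edges E \<inter> ?new = {}"
    using line_graph_edges_subset_Pow by blast
  have "inj_on (\<lambda>f. {{u, w}, f}) {f \<in> E. u \<in> f}"
    using fresh_edge by (intro inj_onI) (simp add: doubleton_eq_iff, blast)
  then have new: "card ?new = vertex_degree E u"
    unfolding vertex_degree_def by (rule card_image)
  have "card (line_graph_edges (insert {u, w} E)) = card (line_graph_edges E \<union> ?new)"
    by (simp only: line_graph_edges_add_pendant[OF assms(2,3)])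
  also have "\<dots> = card (line_graph_edges E) + card ?new"
    using assms(1) disjoint by (simp add: card_Un_disjoint finite_line_graph_edges)
  finally show ?thesis using new by simp
qed

lemma vertex_degree_add_pendant:
  assumes "finite E" and "w \<notin> \<Union>E"
  shows "vertex_degree (insert {u, w} E) u = vertex_degree E u + 1"
    and "vertex_degree (insert {u, w} E) w = 1"
proof -
  have "{f \<in> insert {u, w} E. u \<in> f} = insert {u, w} {f \<in> E. u \<in> f}" by auto
  moreover have "{u, w} \<notin> E" using assms(2) by blast
  ultimately show "vertex_degree (insert {u, w} E) u = vertex_degree E u + 1"
    using assms(1) by (simp add: vertex_degree_def)
  have "{f \<in> insert {u, w} E. w \<in> f} = {{u, w}}" using assms(2) by auto
  then show "vertex_degree (insert {u, w} E) w = 1" by (simp add: vertex_degree_def)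
qed

definition line_feasible_at :: "nat \<Rightarrow> nat \<Rightarrow> nat \<Rightarrow> nat \<Rightarrow> bool" where
  "line_feasible_at n m v t \<longleftrightarrow> (\<exists>(V::nat set) E. simple_graph V E \<and>
     card E = n \<and> card (line_graph_edges E) = m \<and> vertex_degree E v = t)"

lemma line_feasible_atI:
  fixes V :: "nat set"
  assumes "simple_graph V E" "card E = n" "card (line_graph_edges E) = m" "vertex_degree E v = t"
  shows "line_feasible_at n m v t"
  using assms unfolding line_feasible_at_def by blast

lemma line_feasible_at_imp_line_feasible:
  "line_feasible_at n m v t \<Longrightarrow> line_feasible n m"
  unfolding line_feasible_at_def line_feasible_def line_graph_vertices_def by blast

lemma line_feasible_at_empty: "line_feasible_at 0 0 v 0"
proof (rule line_feasible_atI)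
  show "simple_graph ({} :: nat set) {}" unfolding simple_graph_def by simp
  show "card (line_graph_edges {}) = 0" unfolding line_graph_edges_def by simp
qed (simp_all add: vertex_degree_eq_0)

lemma line_feasible_at_fresh_vertex:
  assumes "line_feasible_at n m v t"
  obtains u where "line_feasible_at n m u 0"
proof -
  obtain V :: "nat set" and E where G: "simple_graph V E" "card E = n"
    "card (line_graph_edges E) = m"
    using assms unfolding line_feasible_at_def by blast
  have "finite V" using G(1) by (rule simple_graph_finite_vertices)
  then obtain u :: nat where "u \<notin> V"
    using ex_new_if_finite infinite_UNIV_nat by blast
  then have "u \<notin> \<Union>E" using simple_graph_Union_subset[OF G(1)] by blast
  then have "vertex_degree E u = 0" by (rule vertex_degree_eq_0)
  then show thesis
    using that line_feasible_atI[OF G] by blast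
qed

lemma line_feasible_at_add_pendant:
  assumes "line_feasible_at n m v t"
  obtains w where "line_feasible_at (n + 1) (m + t) v (t + 1)"
    and "line_feasible_at (n + 1) (m + t) w 1"
proof -
  obtain V :: "nat set" and E where G: "simple_graph V E" "card E = n"
    "card (line_graph_edges E) = m" "vertex_degree E v = t"
    using assms unfolding line_feasible_at_def by blast
  have fin: "finite E" using G(1) by (rule simple_graph_finite_edges)
  have "finite (insert v V)" using simple_graph_finite_vertices[OF G(1)] by simp
  then obtain w :: nat where "w \<notin> insert v V"
    using ex_new_if_finite infinite_UNIV_nat by blast
  then have w: "w \<notin> \<Union>E" "v \<noteq> w"
    using simple_graph_Union_subset[OF G(1)] by auto
  let ?E = "insert {v, w} E"
  have "simple_graph (insert v (insert w V)) ?E"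
    using G(1) w(2) by (rule simple_graph_add_edge)
  moreover have "card ?E = n + 1"
  proof -
    have "{v, w} \<notin> E" using w(1) by blast
    then show ?thesis using fin G(2) by simp
  qed
  moreover have "card (line_graph_edges ?E) = m + t"
    using card_line_graph_edges_add_pendant[OF fin w] G(3,4) by simp
  moreover have "vertex_degree ?E v = t + 1" "vertex_degree ?E w = 1"
    using vertex_degree_add_pendant[OF fin w(1)] G(4) by simp_all
  ultimately show thesis
    using that line_feasible_atI by metis
qed

lemma choose_two_Suc: "Suc n choose 2 = (n choose 2) + n"
  using binomial_Suc_Suc[of n 1] by (simp add: numeral_2_eq_2)

lemma line_feasible_at_star: "line_feasible_at d (d choose 2) v d"
proof (induction d)
  case 0
  show ?case by (simp add: binomial_eq_0 line_feasible_at_empty)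
next
  case (Suc d)
  then show ?case
    using line_feasible_at_add_pendant[OF Suc.IH] by (simp add: choose_two_Suc)
qed

lemma line_feasible_at_add_path:
  assumes "line_feasible_at n m v 1"
  obtains w where "line_feasible_at (n + j) (m + j) w 1"
  using assms
proof (induction j arbitrary: n m v)
  case 0
  then show ?case by simp
next
  case (Suc j)
  obtain w where "line_feasible_at (n + 1) (m + 1) w 1"
    using line_feasible_at_add_pendant[OF Suc.prems(2)] by blast
  then show ?case
    using Suc.IH[of "n + 1" "m + 1"] Suc.prems(1) by simp
qed

lemma line_feasible_at_add_isolated_edges:
  assumes "line_feasible_at n m v t" and "n \<le> n'"
  obtains u s where "line_feasible_at n' m u s"
  using assms(2,1)
proof (induction n' arbitrary: thesis rule: dec_induct)
  case base
  then show ?case by blast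
next
  case (step n')
  obtain u s where "line_feasible_at n' m u s" using step.IH step.prems(2) by blast
  then obtain u' where "line_feasible_at n' m u' 0" by (rule line_feasible_at_fresh_vertex)
  then have "line_feasible_at (Suc n') m u' 1"
    using line_feasible_at_add_pendant by fastforce
  then show ?case by (rule step.prems(1))
qed

lemma triangular_decomposition:
  fixes m k :: nat
  assumes "m < (k + 1) choose 2"
  shows "\<exists>d r. d \<le> k \<and> r < d \<and> m = (d choose 2) + r"
  using assms
proof (induction k)
  case 0
  then show ?case by (simp add: binomial_eq_0)
next
  case (Suc k)
  show ?case
  proof (cases "m < (k + 1) choose 2")
    case True
    then show ?thesis using Suc.IH le_SucI by blast
  next
    case False
    then have "Suc k choose 2 \<le> m" by simp
    moreover have "m < (Suc k choose 2) + Suc k"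
      using Suc.prems choose_two_Suc[of "Suc k"] by simp
    ultimately have "Suc k \<le> Suc k \<and> m - (Suc k choose 2) < Suc k \<and>
        m = (Suc k choose 2) + (m - (Suc k choose 2))"
      by linarith
    then show ?thesis by blast
  qed
qed

theorem mainTheorem17:
  fixes N M :: nat
  assumes "N \<ge> 1"
    and "int M \<le> int ((N div 2 + 1) choose 2) - 1"
  shows "line_feasible N M"
proof -
  have "M < (N div 2 + 1) choose 2" using assms(2) by linarith
  then obtain d r where d: "d \<le> N div 2" and r: "r < d" and M: "M = (d choose 2) + r"
    using triangular_decomposition by blast
  obtain u where "line_feasible_at d (d choose 2) u 0"
    using line_feasible_at_star by (rule line_feasible_at_fresh_vertex)
  then have "line_feasible_at (d + 1) (d choose 2) u 1"
    using line_feasible_at_add_pendant by fastforce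
  then obtain w where "line_feasible_at (d + 1 + r) M w 1"
    unfolding M by (rule line_feasible_at_add_path)
  moreover have "d + 1 + r \<le> N" using d r by linarith
  ultimately obtain v t where "line_feasible_at N M v t"
    by (rule line_feasible_at_add_isolated_edges)
  then show ?thesis by (rule line_feasible_at_imp_line_feasible)
qed

end
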